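(* Let $\Sigma$ be a finite set of denial constraints, $D$ a nonempty instance, and $0<\epsilon<1$ such that $\epsilon|D|$ is an integer. Let $D_k\subseteq D$ with $|D_k|=\epsilon|D|$, and $D'=D\setminus D_k$. Then $$\mathit{inc\text{-}deg}^{c,g_3}(D',\Sigma)\le \frac{1}{1-\epsilon}\,\mathit{inc\text{-}deg}^{c,g_3}(D,\Sigma) \quad\text{and}\quad \mathit{inc\text{-}deg}^{c,g_3}(D,\Sigma)\le \frac{1}{1-\epsilon}\,\mathit{inc\text{-}deg}^{c,g_3}(D',\Sigma)+\epsilon .$$ Moreover, if no tuple of $D_k$ participates in a violation of $\Sigma$ in $D$ (i.e. no tuple of $D_k$ belongs to a subset-minimal set $S\subseteq D$ of tuples jointly violating some constraint of $\Sigma$), then $\mathit{inc\text{-}deg}^{c,g_3}(D,\Sigma)\le \frac{1}{1-\epsilon}\,\mathit{inc\text{-}deg}^{c,g_3}(D',\Sigma)$.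
   Context: A database instance is a finite set of ground atoms (tuples). A denial constraint (DC) is a sentence $\neg\exists\bar x\,(P_1(\bar x_1)\wedge\dots\wedge P_m(\bar x_m)\wedge\varphi)$ with the $P_i$ schema predicates and $\varphi$ a possibly empty conjunction of built-in comparisons; a set $S$ of tuples jointly violates it if $S$ satisfies the existential body. A subset-repair (S-repair) of $D$ wrt. $\Sigma$ is a $\subseteq$-maximal subset $D'\subseteq D$ that satisfies $\Sigma$; a cardinality-repair (C-repair) is an S-repair of maximum cardinality; $\mathit{Crep}(D,\Sigma)$ is the set of C-repairs. For nonempty $D$, $$\mathit{inc\text{-}deg}^{c,g_3}(D,\Sigma)=\frac{|D|-\max\{|D'| : D'\in \mathit{Crep}(D,\Sigma)\}}{|D|}.$$ *)

theory Defs
  imports Main "HOL.Real"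
begin

text \<open>Ground atoms (tuples): a predicate name together with a tuple of values.\<close>
type_synonym 'v atom = "string \<times> 'v list"

datatype 'v dterm = Var nat | Const 'v

datatype cmp = CEq | CNeq | CLt | CLe | CGt | CGe

fun eval_cmp :: "cmp \<Rightarrow> 'v::linorder \<Rightarrow> 'v \<Rightarrow> bool" where
  "eval_cmp CEq a b = (a = b)"
| "eval_cmp CNeq a b = (a \<noteq> b)"
| "eval_cmp CLt a b = (a < b)"
| "eval_cmp CLe a b = (a \<le> b)"
| "eval_cmp CGt a b = (a > b)"
| "eval_cmp CGe a b = (a \<ge> b)"

fun eval_term :: "(nat \<Rightarrow> 'v) \<Rightarrow> 'v dterm \<Rightarrow> 'v" where
  "eval_term \<nu> (Var i) = \<nu> i"
| "eval_term \<nu> (Const c) = c"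

text \<open>A denial constraint  not exists x (P1(x1) and ... and Pm(xm) and phi):
  the list of relational atoms P_i(x_i) and the conjunction phi of comparisons.\<close>
datatype 'v dc = DC (dc_atoms: "(string \<times> 'v dterm list) list")
                    (dc_comps: "('v dterm \<times> cmp \<times> 'v dterm) list")

definition wf_dc :: "'v dc \<Rightarrow> bool" where
  "wf_dc \<kappa> \<longleftrightarrow> dc_atoms \<kappa> \<noteq> []"

definition violates :: "'v::linorder atom set \<Rightarrow> 'v dc \<Rightarrow> bool" where
  "violates S \<kappa> \<longleftrightarrow> (\<exists>\<nu>.
      (\<forall>(P, ts) \<in> set (dc_atoms \<kappa>). (P, map (eval_term \<nu>) ts) \<in> S) \<and>
      (\<forall>(a, c, b) \<in> set (dc_comps \<kappa>). eval_cmp c (eval_term \<nu> a) (eval_term \<nu> b)))"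

definition satisfies :: "'v::linorder atom set \<Rightarrow> 'v dc set \<Rightarrow> bool" where
  "satisfies D \<Sigma> \<longleftrightarrow> (\<forall>\<kappa>\<in>\<Sigma>. \<not> violates D \<kappa>)"

definition is_srepair :: "'v::linorder atom set \<Rightarrow> 'v dc set \<Rightarrow> 'v atom set \<Rightarrow> bool" where
  "is_srepair D \<Sigma> D' \<longleftrightarrow> D' \<subseteq> D \<and> satisfies D' \<Sigma> \<and>
     (\<forall>D''. D' \<subset> D'' \<and> D'' \<subseteq> D \<longrightarrow> \<not> satisfies D'' \<Sigma>)"

definition is_crepair :: "'v::linorder atom set \<Rightarrow> 'v dc set \<Rightarrow> 'v atom set \<Rightarrow> bool" where
  "is_crepair D \<Sigma> D' \<longleftrightarrow> is_srepair D \<Sigma> D' \<and>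
     (\<forall>D''. is_srepair D \<Sigma> D'' \<longrightarrow> card D'' \<le> card D')"

definition Crep :: "'v::linorder atom set \<Rightarrow> 'v dc set \<Rightarrow> 'v atom set set" where
  "Crep D \<Sigma> = {D'. is_crepair D \<Sigma> D'}"

definition inc_deg_c_g3 :: "'v::linorder atom set \<Rightarrow> 'v dc set \<Rightarrow> real" where
  "inc_deg_c_g3 D \<Sigma> =
     (real (card D) - real (Max (card ` Crep D \<Sigma>))) / real (card D)"

definition participates :: "'v::linorder atom set \<Rightarrow> 'v dc set \<Rightarrow> 'v atom \<Rightarrow> bool" where
  "participates D \<Sigma> t \<longleftrightarrow> (\<exists>\<kappa>\<in>\<Sigma>. \<exists>S. S \<subseteq> D \<and> t \<in> S \<and> violates S \<kappa> \<and>
       (\<forall>S'. S' \<subset> S \<longrightarrow> \<not> violates S' \<kappa>))"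

end

theory Submission
  imports Defs
begin

text \<open>All three bounds reduce to the size \<open>m(D)\<close> of a largest consistent subset of \<open>D\<close>,
  which is the common size of all C-repairs. Removing \<open>D\<^sub>k\<close> loses at most \<open>|D\<^sub>k|\<close> consistent
  tuples, so \<open>m(D) \<le> m(D - D\<^sub>k) + |D\<^sub>k|\<close>, and by monotonicity \<open>m(D - D\<^sub>k) \<le> m(D)\<close>. If no
  tuple of \<open>D\<^sub>k\<close> lies in a minimal violation, then adding \<open>D\<^sub>k\<close> to a consistent subset of
  \<open>D - D\<^sub>k\<close> keeps it consistent, since every violation contains a minimal one; hence
  \<open>m(D) = m(D - D\<^sub>k) + |D\<^sub>k|\<close>. The inequalities then follow by arithmetic with
  \<open>|D - D\<^sub>k| = (1 - \<epsilon>) |D|\<close>.\<close>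

lemma violates_mono: "violates S \<kappa> \<Longrightarrow> S \<subseteq> T \<Longrightarrow> violates T \<kappa>"
  unfolding violates_def by blast

lemma satisfies_mono: "satisfies T \<Sigma> \<Longrightarrow> S \<subseteq> T \<Longrightarrow> satisfies S \<Sigma>"
  unfolding satisfies_def using violates_mono by blast

lemma satisfies_empty: "\<forall>\<kappa>\<in>\<Sigma>. wf_dc \<kappa> \<Longrightarrow> satisfies {} \<Sigma>"
  unfolding satisfies_def violates_def wf_dc_def
  by (metis (no_types, lifting) case_prodE empty_iff list.set_sel(1))

lemma violates_minimal_subset:
  assumes "finite S" "violates S \<kappa>"
  obtains M where "M \<subseteq> S" "violates M \<kappa>" "\<forall>S'. S' \<subset> M \<longrightarrow> \<not> violates S' \<kappa>"
proof -
  define A where "A = {M. M \<subseteq> S \<and> violates M \<kappa>}"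
  have "finite A"
    unfolding A_def by (rule finite_subset[where B = "Pow S"]) (auto simp: assms(1))
  moreover have "S \<in> A"
    unfolding A_def using assms(2) by simp
  ultimately obtain M where "M \<in> A" and min: "\<forall>X \<in> A. X \<subseteq> M \<longrightarrow> M = X"
    by (meson finite_has_minimal2)
  then have M: "M \<subseteq> S" "violates M \<kappa>"
    unfolding A_def by auto
  show ?thesis
  proof (rule that[OF M], intro allI impI notI)
    fix S' assume "S' \<subset> M" "violates S' \<kappa>"
    then show False
      using min M(1) unfolding A_def by blast
  qed
qed

definition max_consistent_card :: "'v::linorder atom set \<Rightarrow> 'v dc set \<Rightarrow> nat" where
  "max_consistent_card D \<Sigma> = Max (card ` {X. X \<subseteq> D \<and> satisfies X \<Sigma>})"

lemma consistent_card_le_max_consistent_card: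
  "finite D \<Longrightarrow> X \<subseteq> D \<Longrightarrow> satisfies X \<Sigma> \<Longrightarrow> card X \<le> max_consistent_card D \<Sigma>"
  unfolding max_consistent_card_def by (intro Max_ge) auto

lemma max_consistent_card_attained:
  assumes "finite D" "\<forall>\<kappa>\<in>\<Sigma>. wf_dc \<kappa>"
  obtains R where "R \<subseteq> D" "satisfies R \<Sigma>" "card R = max_consistent_card D \<Sigma>"
proof -
  have "{} \<in> {X. X \<subseteq> D \<and> satisfies X \<Sigma>}"
    using satisfies_empty[OF assms(2)] by simp
  then have "max_consistent_card D \<Sigma> \<in> card ` {X. X \<subseteq> D \<and> satisfies X \<Sigma>}"
    unfolding max_consistent_card_def using assms(1) by (intro Max_in) auto
  then obtain R where "R \<subseteq> D" "satisfies R \<Sigma>" "max_consistent_card D \<Sigma> = card R"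
    by auto
  then show ?thesis
    by (intro that) simp_all
qed

lemma max_consistent_card_le_card:
  assumes "finite D" "\<forall>\<kappa>\<in>\<Sigma>. wf_dc \<kappa>"
  shows "max_consistent_card D \<Sigma> \<le> card D"
proof -
  obtain R where "R \<subseteq> D" "card R = max_consistent_card D \<Sigma>"
    using max_consistent_card_attained[OF assms] .
  then show ?thesis
    using card_mono[OF assms(1)] by metis
qed

lemma max_consistent_card_mono:
  assumes "finite D" "\<forall>\<kappa>\<in>\<Sigma>. wf_dc \<kappa>" "D' \<subseteq> D"
  shows "max_consistent_card D' \<Sigma> \<le> max_consistent_card D \<Sigma>"
proof -
  obtain R where R: "R \<subseteq> D'" "satisfies R \<Sigma>" "card R = max_consistent_card D' \<Sigma>"
    using max_consistent_card_attained[OF finite_subset[OF assms(3,1)] assms(2)] .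
  then have "R \<subseteq> D"
    using assms(3) by blast
  then show ?thesis
    using consistent_card_le_max_consistent_card[OF assms(1) _ R(2)] R(3) by simp
qed

lemma card_Crep_eq_max_consistent_card:
  assumes "finite D" "\<forall>\<kappa>\<in>\<Sigma>. wf_dc \<kappa>"
  shows "card ` Crep D \<Sigma> = {max_consistent_card D \<Sigma>}"
proof -
  let ?m = "max_consistent_card D \<Sigma>"
  have srepair_if_max: "is_srepair D \<Sigma> R"
    if R: "R \<subseteq> D" "satisfies R \<Sigma>" "card R = ?m" for R
    unfolding is_srepair_def
  proof (intro conjI allI impI R(1,2))
    fix D'' assume "R \<subset> D'' \<and> D'' \<subseteq> D"
    then have "card R < card D''"
      using assms(1) by (meson psubset_card_mono rev_finite_subset)
    then show "\<not> satisfies D'' \<Sigma>"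
      using R(3) consistent_card_le_max_consistent_card[OF assms(1), of D'' \<Sigma>]
        \<open>R \<subset> D'' \<and> D'' \<subseteq> D\<close> by linarith
  qed
  obtain R0 where R0: "R0 \<subseteq> D" "satisfies R0 \<Sigma>" "card R0 = ?m"
    using max_consistent_card_attained[OF assms] .
  have crepair_iff: "is_crepair D \<Sigma> R \<longleftrightarrow> R \<subseteq> D \<and> satisfies R \<Sigma> \<and> card R = ?m" for R
  proof
    assume R: "is_crepair D \<Sigma> R"
    then have "R \<subseteq> D" "satisfies R \<Sigma>"
      unfolding is_crepair_def is_srepair_def by auto
    moreover have "?m \<le> card R"
      using R srepair_if_max[OF R0] R0(3) unfolding is_crepair_def by auto
    ultimately show "R \<subseteq> D \<and> satisfies R \<Sigma> \<and> card R = ?m"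
      using consistent_card_le_max_consistent_card[OF assms(1)] le_antisym by blast
  next
    assume R: "R \<subseteq> D \<and> satisfies R \<Sigma> \<and> card R = ?m"
    have "card R' \<le> card R" if "is_srepair D \<Sigma> R'" for R'
      using that R consistent_card_le_max_consistent_card[OF assms(1)]
      unfolding is_srepair_def by auto
    then show "is_crepair D \<Sigma> R"
      unfolding is_crepair_def using srepair_if_max R by blast
  qed
  have "?m \<in> card ` Crep D \<Sigma>"
    unfolding Crep_def crepair_iff using R0 by (intro image_eqI[of _ _ R0]) auto
  moreover have "card ` Crep D \<Sigma> \<subseteq> {?m}"
    unfolding Crep_def crepair_iff by auto
  ultimately show ?thesis
    by auto
qed

lemma inc_deg_c_g3_eq:
  assumes "finite D" "\<forall>\<kappa>\<in>\<Sigma>. wf_dc \<kappa>"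
  shows "inc_deg_c_g3 D \<Sigma> = (real (card D) - real (max_consistent_card D \<Sigma>)) / real (card D)"
  unfolding inc_deg_c_g3_def card_Crep_eq_max_consistent_card[OF assms] by simp

lemma max_consistent_card_le_Diff_add_card:
  assumes "finite D" "\<forall>\<kappa>\<in>\<Sigma>. wf_dc \<kappa>"
  shows "max_consistent_card D \<Sigma> \<le> max_consistent_card (D - K) \<Sigma> + card (K \<inter> D)"
proof -
  obtain R where R: "R \<subseteq> D" "satisfies R \<Sigma>" "card R = max_consistent_card D \<Sigma>"
    using max_consistent_card_attained[OF assms] .
  have "card R \<le> card ((R - K) \<union> (K \<inter> D))"
    using R(1) assms(1) by (intro card_mono) (auto intro: finite_subset)
  also have "\<dots> \<le> card (R - K) + card (K \<inter> D)"
    by (rule card_Un_le)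
  also have "card (R - K) \<le> max_consistent_card (D - K) \<Sigma>"
    using R(1) by (intro consistent_card_le_max_consistent_card finite_Diff assms(1)
        satisfies_mono[OF R(2)]) auto
  finally show ?thesis
    using R(3) by simp
qed

lemma satisfies_Un_nonparticipating:
  assumes "finite D" "R \<union> K \<subseteq> D" "satisfies R \<Sigma>" "\<forall>t\<in>K. \<not> participates D \<Sigma> t"
  shows "satisfies (R \<union> K) \<Sigma>"
  unfolding satisfies_def
proof (intro ballI notI)
  fix \<kappa> assume "\<kappa> \<in> \<Sigma>" and "violates (R \<union> K) \<kappa>"
  moreover have "finite (R \<union> K)"
    using assms(1,2) by (rule finite_subset[rotated])
  ultimately obtain M where M: "M \<subseteq> R \<union> K" "violates M \<kappa>" "\<forall>S'. S' \<subset> M \<longrightarrow> \<not> violates S' \<kappa>"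
    using violates_minimal_subset by metis
  have "M \<inter> K = {}"
  proof (rule ccontr)
    assume "M \<inter> K \<noteq> {}"
    then obtain t where "t \<in> M" "t \<in> K"
      by blast
    moreover have "M \<subseteq> D"
      using M(1) assms(2) by blast
    ultimately have "participates D \<Sigma> t"
      unfolding participates_def using \<open>\<kappa> \<in> \<Sigma>\<close> M(2,3) by blast
    then show False
      using \<open>t \<in> K\<close> assms(4) by blast
  qed
  then have "violates R \<kappa>"
    using M(1,2) violates_mono by blast
  then show False
    using assms(3) \<open>\<kappa> \<in> \<Sigma>\<close> unfolding satisfies_def by blast
qed

lemma max_consistent_card_Diff_add_card_le:
  assumes "finite D" "\<forall>\<kappa>\<in>\<Sigma>. wf_dc \<kappa>" "K \<subseteq> D" "\<forall>t\<in>K. \<not> participates D \<Sigma> t"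
  shows "max_consistent_card (D - K) \<Sigma> + card K \<le> max_consistent_card D \<Sigma>"
proof -
  obtain R where R: "R \<subseteq> D - K" "satisfies R \<Sigma>" "card R = max_consistent_card (D - K) \<Sigma>"
    using max_consistent_card_attained[OF finite_Diff[OF assms(1)] assms(2)] .
  have "card R + card K = card (R \<union> K)"
    using R(1) assms(1,3) finite_subset by (intro card_Un_disjoint[symmetric]) auto
  also have "\<dots> \<le> max_consistent_card D \<Sigma>"
  proof (rule consistent_card_le_max_consistent_card[OF assms(1)])
    show "R \<union> K \<subseteq> D"
      using R(1) assms(3) by blast
    then show "satisfies (R \<union> K) \<Sigma>"
      using satisfies_Un_nonparticipating[OF assms(1) _ R(2) assms(4)] by blast
  qed
  finally show ?thesis
    using R(3) by simp
qed

text \<open>With \<open>n = |D|\<close>, \<open>k = |D\<^sub>k|\<close>, \<open>c = m(D)\<close>, \<open>c' = m(D - D\<^sub>k)\<close> the two degrees are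
  \<open>(n - c)/n\<close> and \<open>(n - k - c')/(n - k)\<close>, and \<open>1/(1 - \<epsilon>) = n/(n - k)\<close>.\<close>

lemma removal_deg_upper_bound:
  fixes n k c c' \<epsilon> :: real
  assumes "0 < n" "\<epsilon> < 1" "k = \<epsilon> * n" "c \<le> c' + k"
  shows "(n - k - c') / (n - k) \<le> 1 / (1 - \<epsilon>) * ((n - c) / n)"
proof -
  have nk: "n - k = (1 - \<epsilon>) * n"
    using assms(3) by (simp add: algebra_simps)
  have "0 < n - k"
    unfolding nk using assms(1,2) by simp
  then have "(n - k - c') / (n - k) \<le> (n - c) / (n - k)"
    using assms(4) by (intro divide_right_mono) auto
  also have "\<dots> = 1 / (1 - \<epsilon>) * ((n - c) / n)"
    unfolding nk by simp
  finally show ?thesis .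
qed

lemma removal_deg_rescale:
  fixes n k x \<epsilon> :: real
  assumes "0 < n" "0 \<le> \<epsilon>" "\<epsilon> < 1" "k = \<epsilon> * n" "0 \<le> x"
  shows "x / n \<le> 1 / (1 - \<epsilon>) * (x / (n - k))"
proof -
  have nk: "n - k = (1 - \<epsilon>) * n"
    using assms(4) by (simp add: algebra_simps)
  have "(1 - \<epsilon>) * ((1 - \<epsilon>) * n) \<le> n"
    using assms(1-3) by (simp add: mult_le_cancel_right1 mult_le_one mult.assoc[symmetric])
  then have "x / n \<le> x / ((1 - \<epsilon>) * ((1 - \<epsilon>) * n))"
    using assms(1,3,5) by (intro divide_left_mono) auto
  also have "\<dots> = 1 / (1 - \<epsilon>) * (x / (n - k))"
    unfolding nk by simp
  finally show ?thesis .
qed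

lemma removal_deg_lower_bound:
  fixes n k c c' d \<epsilon> :: real
  assumes "0 < n" "0 \<le> \<epsilon>" "\<epsilon> < 1" "k = \<epsilon> * n" "c' \<le> n - k" "c' + k \<le> c + d"
  shows "(n - c) / n \<le> 1 / (1 - \<epsilon>) * ((n - k - c') / (n - k)) + d / n"
proof -
  have "(n - c) / n \<le> (n - k - c') / n + d / n"
    unfolding add_divide_distrib[symmetric] using assms(1,6) by (intro divide_right_mono) auto
  also have "(n - k - c') / n \<le> 1 / (1 - \<epsilon>) * ((n - k - c') / (n - k))"
    using assms(5) by (intro removal_deg_rescale[OF assms(1-4)]) simp
  finally show ?thesis
    by simp
qed

theorem proposition3:
  fixes \<Sigma> :: "'v::linorder dc set" and D Dk :: "'v atom set" and \<epsilon> :: real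
  assumes "finite \<Sigma>" and "\<forall>\<kappa>\<in>\<Sigma>. wf_dc \<kappa>"
    and "finite D" and "D \<noteq> {}"
    and "0 < \<epsilon>" and "\<epsilon> < 1"
    and "\<epsilon> * real (card D) \<in> \<int>"
    and "Dk \<subseteq> D" and "real (card Dk) = \<epsilon> * real (card D)"
  shows "inc_deg_c_g3 (D - Dk) \<Sigma> \<le> 1 / (1 - \<epsilon>) * inc_deg_c_g3 D \<Sigma>
       \<and> inc_deg_c_g3 D \<Sigma> \<le> 1 / (1 - \<epsilon>) * inc_deg_c_g3 (D - Dk) \<Sigma> + \<epsilon>
       \<and> ((\<forall>t\<in>Dk. \<not> participates D \<Sigma> t) \<longrightarrow>
            inc_deg_c_g3 D \<Sigma> \<le> 1 / (1 - \<epsilon>) * inc_deg_c_g3 (D - Dk) \<Sigma>)"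
proof -
  define n k c c' where "n = real (card D)" and "k = real (card Dk)"
    and "c = real (max_consistent_card D \<Sigma>)" and "c' = real (max_consistent_card (D - Dk) \<Sigma>)"
  have "0 < n" and "k = \<epsilon> * n"
    using assms(3,4,9) by (auto simp: n_def k_def card_gt_0_iff)
  have "card Dk \<le> card D"
    using card_mono[OF assms(3,8)] .
  then have card_Diff: "real (card (D - Dk)) = n - k"
    using card_Diff_subset[OF finite_subset[OF assms(8,3)] assms(8)] by (simp add: n_def k_def)
  have deg_D: "inc_deg_c_g3 D \<Sigma> = (n - c) / n"
    and deg_Diff: "inc_deg_c_g3 (D - Dk) \<Sigma> = (n - k - c') / (n - k)"
    using assms(2,3) by (simp_all add: inc_deg_c_g3_eq n_def c_def c'_def card_Diff)
  have "c' \<le> n - k"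
    using max_consistent_card_le_card[OF finite_Diff[OF assms(3)] assms(2)] card_Diff
    unfolding c'_def by (metis of_nat_mono)
  note lower = removal_deg_lower_bound[OF \<open>0 < n\<close> less_imp_le[OF assms(5)] assms(6)
      \<open>k = \<epsilon> * n\<close> \<open>c' \<le> n - k\<close>]
  have "c \<le> c' + k"
    using max_consistent_card_le_Diff_add_card[OF assms(3,2), of Dk] Int_absorb2[OF assms(8)]
    unfolding c_def c'_def k_def of_nat_add[symmetric] of_nat_le_iff by simp
  moreover have "c' \<le> c"
    using max_consistent_card_mono[OF assms(3,2), of "D - Dk"] unfolding c_def c'_def by simp
  moreover have "c' + k \<le> c" if "\<forall>t\<in>Dk. \<not> participates D \<Sigma> t"
    using max_consistent_card_Diff_add_card_le[OF assms(3,2,8) that]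
    unfolding c_def c'_def k_def of_nat_add[symmetric] of_nat_le_iff .
  ultimately show ?thesis
    unfolding deg_D deg_Diff
    using removal_deg_upper_bound[OF \<open>0 < n\<close> assms(6) \<open>k = \<epsilon> * n\<close>]
      lower[of c k] lower[of c 0] \<open>0 < n\<close> \<open>k = \<epsilon> * n\<close>
    by simp
qed

end
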